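(* Let $1<p\le2$ and $\varepsilon\in(0,3)$. For all sufficiently large $n$ (depending on $p,\varepsilon$) there exists an approximately convex set $A\subseteq\ell_p^n$ such that $$\mathcal{H}(A,\operatorname{Co}(A))\ge\log_2 n-\varepsilon\qquad\text{and}\qquad\operatorname{diam}(A)\le\frac{25}{\varepsilon}\,n^{(p-1)/p}(\log_2 n)^2 .$$
   Context: $\ell_p^n$ is $\mathbb{R}^n$ with the norm $(\sum|a_i|^p)^{1/p}$. A set $A$ is approximately convex if $d(tx+(1-t)y,A)\le1$ for all $x,y\in A$, $t\in[0,1]$, where $d(x,A)=\inf_{a\in A}\|x-a\|$. $\mathcal{H}$ is the Hausdorff distance, $\operatorname{Co}$ the convex hull, $\operatorname{diam}(A)=\sup\{\|x-y\|:x,y\in A\}$. *)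

theory Defs
  imports "HOL-Analysis.Analysis"
begin

text \<open>Points of \<open>\<ell>_p^n\<close> are represented as functions \<open>nat \<Rightarrow> real\<close>
  vanishing outside \<open>{..<n}\<close>.\<close>

definition lp_space :: "nat \<Rightarrow> (nat \<Rightarrow> real) set" where
  "lp_space n = {x. \<forall>i\<ge>n. x i = 0}"

definition lp_norm :: "real \<Rightarrow> nat \<Rightarrow> (nat \<Rightarrow> real) \<Rightarrow> real" where
  "lp_norm p n x = (\<Sum>i<n. \<bar>x i\<bar> powr p) powr (1 / p)"

definition lp_dist :: "real \<Rightarrow> nat \<Rightarrow> (nat \<Rightarrow> real) \<Rightarrow> (nat \<Rightarrow> real) \<Rightarrow> real" where
  "lp_dist p n x y = lp_norm p n (\<lambda>i. x i - y i)"

definition lp_setdist :: "real \<Rightarrow> nat \<Rightarrow> (nat \<Rightarrow> real) \<Rightarrow> (nat \<Rightarrow> real) set \<Rightarrow> real" where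
  "lp_setdist p n x A = Inf {lp_dist p n x a | a. a \<in> A}"

definition approx_convex :: "real \<Rightarrow> nat \<Rightarrow> (nat \<Rightarrow> real) set \<Rightarrow> bool" where
  "approx_convex p n A \<longleftrightarrow>
     (\<forall>x\<in>A. \<forall>y\<in>A. \<forall>t\<in>{0..1::real}.
        lp_setdist p n (\<lambda>i. t * x i + (1 - t) * y i) A \<le> 1)"

definition conv_hull :: "(nat \<Rightarrow> real) set \<Rightarrow> (nat \<Rightarrow> real) set" where
  "conv_hull A = {z. \<exists>(k::nat) (c::nat \<Rightarrow> real) v.
      (\<forall>j<k. 0 \<le> c j \<and> v j \<in> A) \<and> (\<Sum>j<k. c j) = 1 \<and>
      z = (\<lambda>i. \<Sum>j<k. c j * v j i)}"

definition lp_hausdorff :: "real \<Rightarrow> nat \<Rightarrow> (nat \<Rightarrow> real) set \<Rightarrow> (nat \<Rightarrow> real) set \<Rightarrow> ereal" where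
  "lp_hausdorff p n A B =
     max (SUP a\<in>A. ereal (lp_setdist p n a B)) (SUP b\<in>B. ereal (lp_setdist p n b A))"

definition lp_diam :: "real \<Rightarrow> nat \<Rightarrow> (nat \<Rightarrow> real) set \<Rightarrow> ereal" where
  "lp_diam p n A = (SUP x\<in>A. SUP y\<in>A. ereal (lp_dist p n x y))"

end

theory Submission
  imports Defs "HOL-Real_Asymp.Real_Asymp"
begin

(* Lift each point x of the simplex of mass M in R^m to R^(m+1) by appending the Shannon entropy
   (in bits) of x / M, and let A be the resulting graph.  Entropy is concave, and its concavity
   defect along a segment is at most the binary entropy of the mixing weight, i.e. one bit, so A is
   approximately convex.  The scaled vertices M e_j have entropy 0 and lie in A, so their barycentre
   (M/m, ..., M/m, 0) lies in Co(A).  Once M is large enough, a point of A whose first m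
   coordinates are within L of the barycentre has entropy at least L, because
     ln m - H(q) <= 4/(p-1) m^(p-1) |q - u|_p^p   (u the uniform distribution);
   hence the barycentre is at distance at least L = log2 n - eps from A.  M of order
   n^((p-1)/p) log2 n is large enough, and diam A <= 3M. *)

definition eta :: "real \<Rightarrow> real" where
  "eta u = - u * ln u"

lemma eta_nonneg: "0 \<le> u \<Longrightarrow> u \<le> 1 \<Longrightarrow> 0 \<le> eta u"
  unfolding eta_def by (cases "u = 0") (auto simp: mult_nonneg_nonpos)

lemma xlnx_ge_tangent:
  fixes x z :: real
  assumes "0 \<le> x" "0 < z"
  shows "x * ln z + x - z \<le> x * ln x"
proof (cases "x = 0")
  case False
  then have x: "x > 0" using assms by simp
  have "x * ln (z / x) \<le> x * (z / x - 1)"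
    using ln_le_minus_one[of "z / x"] x assms by (simp add: mult_left_mono)
  then show ?thesis using x assms by (simp add: ln_div algebra_simps)
qed (use assms in simp)

lemma eta_concave:
  fixes a b t :: real
  assumes "0 \<le> a" "0 \<le> b" "0 \<le> t" "t \<le> 1"
  shows "t * eta a + (1 - t) * eta b \<le> eta (t * a + (1 - t) * b)"
proof (cases "t * a + (1 - t) * b = 0")
  case True
  then have "t * a = 0" "(1 - t) * b = 0" using assms
    by (smt (verit) mult_nonneg_nonneg)+
  then show ?thesis by (auto simp: eta_def)
next
  case False
  define z where "z = t * a + (1 - t) * b"
  have z: "z > 0" using False assms unfolding z_def
    by (smt (verit) mult_nonneg_nonneg)
  have a: "t * (a * ln z + a - z) \<le> t * (a * ln a)"
    using xlnx_ge_tangent[OF assms(1) z] assms by (intro mult_left_mono) auto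
  have b: "(1 - t) * (b * ln z + b - z) \<le> (1 - t) * (b * ln b)"
    using xlnx_ge_tangent[OF assms(2) z] assms by (intro mult_left_mono) auto
  have "z * ln z = t * (a * ln z + a - z) + (1 - t) * (b * ln z + b - z)"
    unfolding z_def by (simp add: algebra_simps)
  then show ?thesis using a b unfolding eta_def z_def[symmetric] by simp
qed

lemma mult_ln_mono:
  fixes u z :: real
  assumes "0 \<le> u" "u \<le> z"
  shows "u * ln u \<le> u * ln z"
proof (cases "u = 0")
  case False
  then show ?thesis using assms by (intro mult_left_mono) auto
qed simp

lemma eta_convex_comb_le:
  fixes a b t :: real
  assumes "0 \<le> a" "0 \<le> b" "0 \<le> t" "t \<le> 1"
  shows "eta (t * a + (1 - t) * b)
           \<le> t * eta a + (1 - t) * eta b - a * (t * ln t) - b * ((1 - t) * ln (1 - t))"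
proof -
  define z where "z = t * a + (1 - t) * b"
  have ta: "0 \<le> t * a" "t * a \<le> z" and tb: "0 \<le> (1 - t) * b" "(1 - t) * b \<le> z"
    using assms unfolding z_def by auto
  have ea: "(t * a) * ln (t * a) = t * (a * ln a) + a * (t * ln t)"
    using assms by (cases "t = 0 \<or> a = 0") (auto simp: ln_mult algebra_simps)
  have eb: "((1 - t) * b) * ln ((1 - t) * b) = (1 - t) * (b * ln b) + b * ((1 - t) * ln (1 - t))"
  proof (cases "t = 1 \<or> b = 0")
    case False
    then have "ln ((1 - t) * b) = ln (1 - t) + ln b" using assms by (simp add: ln_mult)
    then show ?thesis by (simp add: algebra_simps)
  qed auto
  have "z * ln z = (t * a) * ln z + ((1 - t) * b) * ln z"
    unfolding z_def by (simp add: algebra_simps)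
  then show ?thesis
    using mult_ln_mono[OF ta] mult_ln_mono[OF tb] ea eb unfolding eta_def z_def[symmetric] by simp
qed

lemma binary_entropy_le_ln2:
  fixes t :: real
  assumes "0 \<le> t" "t \<le> 1"
  shows "- (t * ln t) - (1 - t) * ln (1 - t) \<le> ln 2"
proof -
  have half: "- (s * ln s) \<le> s * ln 2 + 1 / 2 - s" if "0 \<le> s" for s :: real
    using xlnx_ge_tangent[OF that, of "1 / 2"] by (simp add: ln_div algebra_simps)
  show ?thesis using half[of t] half[of "1 - t"] assms by (simp add: algebra_simps)
qed

lemma xlnx_divergence_le_powr:
  fixes p y :: real
  assumes p: "1 < p" "p \<le> 2" and y: "0 \<le> y"
  shows "y * ln y - y + 1 \<le> 4 / (p - 1) * \<bar>y - 1\<bar> powr p"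
proof (cases "y \<le> 2")
  case True
  have "y * ln y \<le> y * (y - 1)"
    using y ln_le_minus_one[of y] by (cases "y = 0") (simp_all add: mult_left_mono)
  moreover have "\<bar>y - 1\<bar> powr 2 \<le> \<bar>y - 1\<bar> powr p"
    using True y p by (intro powr_mono') auto
  moreover have "\<bar>y - 1\<bar> powr p \<le> 4 / (p - 1) * \<bar>y - 1\<bar> powr p"
    using p by (intro mult_le_cancel_right1[THEN iffD2]) (simp add: field_simps)
  ultimately show ?thesis by (simp add: powr_numeral power2_eq_square algebra_simps)
next
  case False
  have "y * ln y \<le> y * (y powr (p - 1) / (p - 1))"
    using ln_powr_bound[of y "p - 1"] False p by (intro mult_left_mono) auto
  also have "\<dots> = y powr p / (p - 1)"
    using False powr_mult_base[of y "p - 1"] by simp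
  also have "\<dots> \<le> (2 * (y - 1)) powr p / (p - 1)"
    using False p by (intro divide_right_mono powr_mono2) auto
  also have "\<dots> = 2 powr p * \<bar>y - 1\<bar> powr p / (p - 1)"
    using False powr_mult[of 2 "y - 1" p] by simp
  also have "\<dots> \<le> 2 powr 2 * \<bar>y - 1\<bar> powr p / (p - 1)"
    using p by (intro divide_right_mono mult_right_mono powr_mono) auto
  finally show ?thesis using False by simp
qed

lemma sum_eta_le_ln:
  fixes q :: "nat \<Rightarrow> real" and m :: nat
  assumes "m \<ge> 1" "\<And>i. i < m \<Longrightarrow> 0 \<le> q i" "(\<Sum>i<m. q i) = 1"
  shows "(\<Sum>i<m. eta (q i)) \<le> ln m"
proof -
  have "(\<Sum>i<m. eta (q i)) \<le> (\<Sum>i<m. q i * ln m - q i + 1 / m)"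
  proof (intro sum_mono)
    fix i assume "i \<in> {..<m}"
    then show "eta (q i) \<le> q i * ln m - q i + 1 / m"
      using xlnx_ge_tangent[of "q i" "1 / m"] assms by (simp add: eta_def ln_div)
  qed
  also have "\<dots> = ln m"
    using assms by (simp add: sum.distrib sum_subtractf sum_distrib_right[symmetric])
  finally show ?thesis .
qed

lemma uniform_divergence_term_le_powr:
  fixes p q m :: real
  assumes p: "1 < p" "p \<le> 2" and q: "0 \<le> q" and m: "0 < m"
  shows "q * ln m - eta q - q + 1 / m \<le> 4 / (p - 1) * m powr (p - 1) * \<bar>q - 1 / m\<bar> powr p"
proof -
  define y where "y = m * q"
  have y: "0 \<le> y" using q m by (simp add: y_def)
  have lhs: "m * (q * ln m - eta q - q + 1 / m) = y * ln y - y + 1"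
    using q m by (cases "q = 0") (auto simp: y_def eta_def ln_mult algebra_simps)
  have "y - 1 = m * (q - 1 / m)" using m by (simp add: y_def field_simps)
  then have "\<bar>y - 1\<bar> = m * \<bar>q - 1 / m\<bar>" using m by (simp add: abs_mult)
  then have "\<bar>y - 1\<bar> powr p = m * (m powr (p - 1) * \<bar>q - 1 / m\<bar> powr p)"
    using m powr_mult_base[of m "p - 1"] by (simp add: powr_mult)
  then have rhs: "m * (4 / (p - 1) * m powr (p - 1) * \<bar>q - 1 / m\<bar> powr p)
      = 4 / (p - 1) * \<bar>y - 1\<bar> powr p"
    by (simp add: algebra_simps)
  show ?thesis
    using xlnx_divergence_le_powr[OF p y] m unfolding lhs[symmetric] rhs[symmetric]
    by (rule mult_left_le_imp_le)
qed

lemma ln_minus_sum_eta_le: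
  fixes q :: "nat \<Rightarrow> real" and m :: nat and p :: real
  assumes p: "1 < p" "p \<le> 2" and "m \<ge> 1" "\<And>i. i < m \<Longrightarrow> 0 \<le> q i" "(\<Sum>i<m. q i) = 1"
  shows "ln m - (\<Sum>i<m. eta (q i))
           \<le> 4 / (p - 1) * m powr (p - 1) * (\<Sum>i<m. \<bar>q i - 1 / m\<bar> powr p)"
proof -
  have "ln m - (\<Sum>i<m. eta (q i)) = (\<Sum>i<m. q i * ln m - eta (q i) - q i + 1 / m)"
    using assms by (simp add: sum.distrib sum_subtractf sum_distrib_right[symmetric])
  also have "\<dots> \<le> (\<Sum>i<m. 4 / (p - 1) * m powr (p - 1) * \<bar>q i - 1 / m\<bar> powr p)"
    using assms by (intro sum_mono uniform_divergence_term_le_powr) auto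
  finally show ?thesis by (simp add: sum_distrib_left)
qed

definition scaled_simplex :: "real \<Rightarrow> nat \<Rightarrow> (nat \<Rightarrow> real) set" where
  "scaled_simplex M m = {x. (\<forall>i<m. 0 \<le> x i) \<and> (\<forall>i\<ge>m. x i = 0) \<and> (\<Sum>i<m. x i) = M}"

definition entropy_bits :: "real \<Rightarrow> nat \<Rightarrow> (nat \<Rightarrow> real) \<Rightarrow> real" where
  "entropy_bits M m x = (\<Sum>i<m. eta (x i / M)) / ln 2"

definition entropy_lift :: "real \<Rightarrow> nat \<Rightarrow> (nat \<Rightarrow> real) \<Rightarrow> nat \<Rightarrow> real" where
  "entropy_lift M m x = x(m := entropy_bits M m x)"

definition entropy_graph :: "real \<Rightarrow> nat \<Rightarrow> (nat \<Rightarrow> real) set" where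
  "entropy_graph M m = entropy_lift M m ` scaled_simplex M m"

lemma scaled_simplex_bounds:
  assumes "x \<in> scaled_simplex M m" "i < m"
  shows "0 \<le> x i" "x i \<le> M"
proof -
  show "0 \<le> x i" using assms by (simp add: scaled_simplex_def)
  have "x i \<le> (\<Sum>j<m. x j)"
    using assms by (intro member_le_sum) (auto simp: scaled_simplex_def)
  then show "x i \<le> M" using assms by (simp add: scaled_simplex_def)
qed

lemma scaled_simplex_normalize:
  assumes "x \<in> scaled_simplex M m" "M > 0"
  shows "\<And>i. i < m \<Longrightarrow> 0 \<le> x i / M" "(\<Sum>i<m. x i / M) = 1"
  using assms by (auto simp: scaled_simplex_def sum_divide_distrib[symmetric])

lemma convex_comb_in_scaled_simplex:
  assumes "x \<in> scaled_simplex M m" "y \<in> scaled_simplex M m" "0 \<le> t" "t \<le> 1"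
  shows "(\<lambda>i. t * x i + (1 - t) * y i) \<in> scaled_simplex M m"
proof -
  have "(\<Sum>i<m. t * x i + (1 - t) * y i) = t * (\<Sum>i<m. x i) + (1 - t) * (\<Sum>i<m. y i)"
    by (simp add: sum.distrib sum_distrib_left)
  also have "\<dots> = M" using assms by (simp add: scaled_simplex_def algebra_simps)
  finally show ?thesis using assms by (auto simp: scaled_simplex_def)
qed

lemma scaled_vertex_in_entropy_graph:
  assumes "j < m" "M > 0"
  shows "(\<lambda>i. if i = j then M else 0) \<in> entropy_graph M m"
proof -
  let ?v = "\<lambda>i. if i = j then M else 0"
  have "(\<Sum>i<m. eta (?v i / M)) = 0"
    using assms by (intro sum.neutral) (auto simp: eta_def)
  then have "entropy_lift M m ?v = ?v"
    using assms by (auto simp: entropy_lift_def entropy_bits_def)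
  moreover have "?v \<in> scaled_simplex M m" using assms by (auto simp: scaled_simplex_def)
  ultimately show ?thesis unfolding entropy_graph_def by (metis image_eqI)
qed

lemma entropy_bits_bounds:
  assumes "x \<in> scaled_simplex M m" "M > 0" "m \<ge> 1"
  shows "0 \<le> entropy_bits M m x" "entropy_bits M m x \<le> log 2 m"
proof -
  have "0 \<le> (\<Sum>i<m. eta (x i / M))"
    using scaled_simplex_bounds[OF assms(1)] assms(2) by (intro sum_nonneg eta_nonneg) auto
  then show "0 \<le> entropy_bits M m x" by (simp add: entropy_bits_def)
  have "(\<Sum>i<m. eta (x i / M)) \<le> ln m"
    using scaled_simplex_normalize[OF assms(1,2)] assms(3) by (intro sum_eta_le_ln) auto
  then show "entropy_bits M m x \<le> log 2 m" by (simp add: entropy_bits_def log_def divide_right_mono)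
qed

lemma entropy_bits_convex_comb:
  assumes x: "x \<in> scaled_simplex M m" and y: "y \<in> scaled_simplex M m"
    and t: "0 \<le> t" "t \<le> 1" and M: "M > 0"
  shows "\<bar>entropy_bits M m (\<lambda>i. t * x i + (1 - t) * y i)
           - (t * entropy_bits M m x + (1 - t) * entropy_bits M m y)\<bar> \<le> 1"
proof -
  define a where "a = (\<lambda>i. x i / M)"
  define b where "b = (\<lambda>i. y i / M)"
  have a: "\<And>i. i < m \<Longrightarrow> 0 \<le> a i" "(\<Sum>i<m. a i) = 1"
    using scaled_simplex_normalize[OF x M] by (auto simp: a_def)
  have b: "\<And>i. i < m \<Longrightarrow> 0 \<le> b i" "(\<Sum>i<m. b i) = 1"
    using scaled_simplex_normalize[OF y M] by (auto simp: b_def)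
  define Z where "Z = (\<Sum>i<m. eta (t * a i + (1 - t) * b i))"
  define X where "X = (\<Sum>i<m. eta (a i))"
  define Y where "Y = (\<Sum>i<m. eta (b i))"
  have "t * X + (1 - t) * Y = (\<Sum>i<m. t * eta (a i) + (1 - t) * eta (b i))"
    by (simp add: X_def Y_def sum.distrib sum_distrib_left)
  also have "\<dots> \<le> Z" unfolding Z_def using a b t by (intro sum_mono eta_concave) auto
  finally have lower: "t * X + (1 - t) * Y \<le> Z" .
  have "Z \<le> (\<Sum>i<m. t * eta (a i) + (1 - t) * eta (b i)
                      - a i * (t * ln t) - b i * ((1 - t) * ln (1 - t)))"
    unfolding Z_def using a b t by (intro sum_mono eta_convex_comb_le) auto
  also have "\<dots> = t * X + (1 - t) * Y + (- (t * ln t) - (1 - t) * ln (1 - t))"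
    using a b by (simp add: X_def Y_def sum.distrib sum_subtractf sum_distrib_left
        sum_distrib_right[symmetric])
  also have "\<dots> \<le> t * X + (1 - t) * Y + ln 2" using binary_entropy_le_ln2[OF t] by simp
  finally have upper: "Z \<le> t * X + (1 - t) * Y + ln 2" .
  have "(t * x i + (1 - t) * y i) / M = t * a i + (1 - t) * b i" for i
    using M by (simp add: a_def b_def field_simps)
  then have "entropy_bits M m (\<lambda>i. t * x i + (1 - t) * y i)
      - (t * entropy_bits M m x + (1 - t) * entropy_bits M m y) = (Z - (t * X + (1 - t) * Y)) / ln 2"
    unfolding entropy_bits_def Z_def X_def Y_def by (simp add: a_def b_def field_simps)
  then show ?thesis using lower upper by (simp add: abs_div)
qed

lemma entropy_bits_ge:
  fixes p L M :: real
  assumes p: "1 < p" "p \<le> 2" and m: "m \<ge> 1" and M: "M > 0"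
    and key: "4 / (p - 1) * m powr (p - 1) * L powr p \<le> (ln m - L * ln 2) * M powr p"
    and x: "x \<in> scaled_simplex M m"
    and close: "(\<Sum>i<m. \<bar>x i - M / m\<bar> powr p) \<le> L powr p"
  shows "L \<le> entropy_bits M m x"
proof -
  define C where "C = 4 / (p - 1) * m powr (p - 1)"
  have "\<bar>x i / M - 1 / m\<bar> powr p = \<bar>x i - M / m\<bar> powr p / M powr p" for i
  proof -
    have "x i / M - 1 / m = (x i - M / m) / M" using M by (simp add: field_simps)
    then show ?thesis using M by (simp add: powr_divide)
  qed
  then have "ln m - (\<Sum>i<m. eta (x i / M)) \<le> C * ((\<Sum>i<m. \<bar>x i - M / m\<bar> powr p) / M powr p)"
    using ln_minus_sum_eta_le[OF p m, of "\<lambda>i. x i / M"] scaled_simplex_normalize[OF x M]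
    by (simp add: C_def sum_divide_distrib)
  also have "\<dots> \<le> C * (L powr p / M powr p)"
    using close p by (intro mult_left_mono divide_right_mono) (auto simp: C_def)
  also have "\<dots> \<le> ln m - L * ln 2"
    using key[folded C_def] M by (simp add: pos_divide_le_eq)
  finally show ?thesis by (simp add: entropy_bits_def field_simps)
qed

lemma powr_mono2_iff:
  fixes a x y :: real
  assumes "0 < a" "0 \<le> x" "0 \<le> y"
  shows "x powr a \<le> y powr a \<longleftrightarrow> x \<le> y"
  using assms powr_mono2[of a x y] powr_less_mono2[of a y x] by (auto simp: not_le[symmetric])

lemma lp_dist_nonneg: "0 \<le> lp_dist p n x y"
  by (simp add: lp_dist_def lp_norm_def)

lemma lp_dist_powr:
  assumes "0 < p"
  shows "lp_dist p n x y powr p = (\<Sum>i<n. \<bar>x i - y i\<bar> powr p)"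
  using assms by (simp add: lp_dist_def lp_norm_def powr_powr sum_nonneg)

lemma lp_dist_Suc_powr:
  assumes "0 < p"
  shows "lp_dist p (Suc m) x y powr p = (\<Sum>i<m. \<bar>x i - y i\<bar> powr p) + \<bar>x m - y m\<bar> powr p"
  using lp_dist_powr[OF assms] by simp

lemma lp_setdist_le:
  assumes "a \<in> A"
  shows "lp_setdist p n x A \<le> lp_dist p n x a"
  unfolding lp_setdist_def
  by (rule cInf_lower) (use assms lp_dist_nonneg in \<open>auto intro: bdd_belowI[of _ 0]\<close>)

lemma lp_setdist_ge:
  assumes "A \<noteq> {}" "\<And>a. a \<in> A \<Longrightarrow> L \<le> lp_dist p n x a"
  shows "L \<le> lp_setdist p n x A"
  unfolding lp_setdist_def by (rule cInf_greatest) (use assms in auto)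

lemma lp_hausdorff_ge_setdist:
  assumes "x \<in> B"
  shows "ereal (lp_setdist p n x A) \<le> lp_hausdorff p n A B"
  unfolding lp_hausdorff_def using assms by (intro max.coboundedI2 SUP_upper)

lemma lp_diam_le:
  assumes "\<And>x y. x \<in> A \<Longrightarrow> y \<in> A \<Longrightarrow> lp_dist p n x y \<le> D"
  shows "lp_diam p n A \<le> ereal D"
  unfolding lp_diam_def using assms by (simp add: SUP_least)

lemma barycenter_in_conv_hull:
  assumes "m \<ge> 1" "\<And>j. j < m \<Longrightarrow> (\<lambda>i. if i = j then M else 0) \<in> A"
  shows "(\<lambda>i. if i < m then M / m else 0) \<in> conv_hull A"
  unfolding conv_hull_def
proof (intro CollectI exI conjI allI impI)
  show "(\<Sum>j<m. 1 / real m) = 1" using assms by simp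
  show "(\<lambda>i. if i < m then M / m else 0) = (\<lambda>i. \<Sum>j<m. 1 / real m * (if i = j then M else 0))"
    by (simp add: if_distrib sum.delta cong: if_cong)
qed (use assms in auto)

lemma entropy_lift_below [simp]: "i < m \<Longrightarrow> entropy_lift M m x i = x i"
  by (simp add: entropy_lift_def)

lemma entropy_lift_at [simp]: "entropy_lift M m x m = entropy_bits M m x"
  by (simp add: entropy_lift_def)

lemma entropy_graph_subset_lp_space: "entropy_graph M m \<subseteq> lp_space (Suc m)"
  by (auto simp: entropy_graph_def entropy_lift_def scaled_simplex_def lp_space_def)

lemma approx_convex_entropy_graph:
  assumes p: "1 < p" and M: "M > 0"
  shows "approx_convex p (Suc m) (entropy_graph M m)"
  unfolding approx_convex_def
proof (intro ballI)
  fix a b t assume "a \<in> entropy_graph M m" "b \<in> entropy_graph M m" and t: "t \<in> {0..1::real}"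
  then obtain x y where x: "x \<in> scaled_simplex M m" and y: "y \<in> scaled_simplex M m"
    and ab: "a = entropy_lift M m x" "b = entropy_lift M m y"
    by (auto simp: entropy_graph_def)
  define z where "z = (\<lambda>i. t * x i + (1 - t) * y i)"
  define w where "w = (\<lambda>i. t * a i + (1 - t) * b i)"
  have z: "z \<in> scaled_simplex M m"
    unfolding z_def using convex_comb_in_scaled_simplex[OF x y] t by auto
  have "lp_dist p (Suc m) w (entropy_lift M m z) powr p
      = \<bar>t * entropy_bits M m x + (1 - t) * entropy_bits M m y - entropy_bits M m z\<bar> powr p"
    using p by (simp add: lp_dist_Suc_powr w_def ab z_def)
  also have "\<dots> \<le> 1 powr p"
    using entropy_bits_convex_comb[OF x y _ _ M, of t] t p
    by (intro powr_mono2) (auto simp: z_def abs_minus_commute)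
  finally have "lp_dist p (Suc m) w (entropy_lift M m z) \<le> 1"
    using powr_mono2_iff[of p _ 1] p lp_dist_nonneg by simp
  moreover have "entropy_lift M m z \<in> entropy_graph M m"
    using z by (simp add: entropy_graph_def)
  ultimately show "lp_setdist p (Suc m) (\<lambda>i. t * a i + (1 - t) * b i) (entropy_graph M m) \<le> 1"
    unfolding w_def by (meson lp_setdist_le order_trans)
qed

lemma lp_hausdorff_entropy_graph_ge:
  fixes p L M :: real
  assumes p: "1 < p" "p \<le> 2" and m: "m \<ge> 1" and M: "M > 0" and L: "0 \<le> L"
    and key: "4 / (p - 1) * m powr (p - 1) * L powr p \<le> (ln m - L * ln 2) * M powr p"
  shows "ereal L \<le> lp_hausdorff p (Suc m) (entropy_graph M m) (conv_hull (entropy_graph M m))"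
proof -
  define P where "P = (\<lambda>i. if i < m then M / m else 0)"
  have P: "P \<in> conv_hull (entropy_graph M m)"
    unfolding P_def using m M by (intro barycenter_in_conv_hull scaled_vertex_in_entropy_graph)
  have "L \<le> lp_setdist p (Suc m) P (entropy_graph M m)"
  proof (rule lp_setdist_ge)
    show "entropy_graph M m \<noteq> {}" using scaled_vertex_in_entropy_graph[of 0 m M] m M by auto
    fix a assume "a \<in> entropy_graph M m"
    then obtain x where x: "x \<in> scaled_simplex M m" and a: "a = entropy_lift M m x"
      by (auto simp: entropy_graph_def)
    define D where "D = (\<Sum>i<m. \<bar>x i - M / m\<bar> powr p)"
    have H: "0 \<le> entropy_bits M m x" using entropy_bits_bounds(1)[OF x M m] .
    have dist: "lp_dist p (Suc m) P a powr p = D + entropy_bits M m x powr p"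
      using p H by (simp add: lp_dist_Suc_powr D_def P_def a abs_minus_commute)
    have "L powr p \<le> D + entropy_bits M m x powr p"
    proof (cases "D \<le> L powr p")
      \<comment> \<open>either x is far from uniform, or it is close and then its entropy is large\<close>
      case True
      then have "L \<le> entropy_bits M m x" using entropy_bits_ge[OF p m M key x] by (simp add: D_def)
      then show ?thesis using L p by (simp add: D_def sum_nonneg add_increasing powr_mono2)
    qed (use powr_ge_zero[of "entropy_bits M m x" p] in linarith)
    then show "L \<le> lp_dist p (Suc m) P a"
      using powr_mono2_iff[of p L "lp_dist p (Suc m) P a"] p L lp_dist_nonneg dist by simp
  qed
  then show ?thesis using lp_hausdorff_ge_setdist[OF P] by (meson ereal_less_eq(3) order_trans)
qed

lemma lp_diam_entropy_graph_le:
  fixes p M :: real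
  assumes p: "1 < p" and m: "m \<ge> 1" and M: "M > 0" and Mlog: "log 2 m \<le> M"
  shows "lp_diam p (Suc m) (entropy_graph M m) \<le> ereal (3 * M)"
proof (rule lp_diam_le)
  fix a b assume "a \<in> entropy_graph M m" "b \<in> entropy_graph M m"
  then obtain x y where x: "x \<in> scaled_simplex M m" and y: "y \<in> scaled_simplex M m"
    and ab: "a = entropy_lift M m x" "b = entropy_lift M m y"
    by (auto simp: entropy_graph_def)
  have "\<bar>x i - y i\<bar> powr p \<le> (x i + y i) * M powr (p - 1)" if "i < m" for i
  proof -
    have "\<bar>x i - y i\<bar> powr p = \<bar>x i - y i\<bar> * \<bar>x i - y i\<bar> powr (p - 1)"
      using powr_mult_base[of "\<bar>x i - y i\<bar>" "p - 1"] by (cases "x i = y i") auto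
    also have "\<dots> \<le> (x i + y i) * M powr (p - 1)"
      using scaled_simplex_bounds[OF x that] scaled_simplex_bounds[OF y that] p
      by (intro mult_mono powr_mono2) auto
    finally show ?thesis .
  qed
  then have "(\<Sum>i<m. \<bar>x i - y i\<bar> powr p) \<le> (\<Sum>i<m. (x i + y i) * M powr (p - 1))"
    by (intro sum_mono) auto
  also have "\<dots> = 2 * M powr p"
    using x y M powr_mult_base[of M "p - 1"]
    by (simp add: scaled_simplex_def sum.distrib sum_distrib_right[symmetric])
  finally have coords: "(\<Sum>i<m. \<bar>x i - y i\<bar> powr p) \<le> 2 * M powr p" .
  have last: "\<bar>entropy_bits M m x - entropy_bits M m y\<bar> powr p \<le> M powr p"
    using entropy_bits_bounds[OF x M m] entropy_bits_bounds[OF y M m] Mlog p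
    by (intro powr_mono2) auto
  have "3 * M powr p \<le> (3 * M) powr p"
    using powr_mono[of 1 p 3] p M by (simp add: powr_mult)
  then have "lp_dist p (Suc m) a b powr p \<le> (3 * M) powr p"
    using coords last p by (simp add: lp_dist_Suc_powr ab)
  then show "lp_dist p (Suc m) a b \<le> 3 * M"
    using powr_mono2_iff[of p _ "3 * M"] p M lp_dist_nonneg by simp
qed

lemma entropy_graph_key_condition:
  fixes p \<epsilon> K L :: real and m :: nat
  assumes p: "1 < p" "p \<le> 2" and \<epsilon>: "0 < \<epsilon>"
    and K: "1 \<le> K" "8 / ((p - 1) * \<epsilon> * ln 2) \<le> K"
    and m: "m \<ge> 1" "2 / (\<epsilon> * ln 2) \<le> m"
    and L: "0 \<le> L" "L = log 2 (Suc m) - \<epsilon>"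
  shows "4 / (p - 1) * m powr (p - 1) * L powr p
           \<le> (ln m - L * ln 2) * (K * Suc m powr ((p - 1) / p) * log 2 (Suc m)) powr p"
proof -
  define n where "n = real (Suc m)"
  have "ln n - ln m = ln (n / m)" using m by (simp add: n_def ln_div)
  also have "n / m = 1 + 1 / m" using m by (simp add: n_def field_simps)
  also have "ln (1 + 1 / m) \<le> 1 / m" by (rule ln_add_one_self_le_self) simp
  also have "\<dots> \<le> \<epsilon> * ln 2 / 2" using m \<epsilon> by (simp add: field_simps)
  finally have "ln n - ln m \<le> \<epsilon> * ln 2 / 2" .
  moreover have "L * ln 2 = ln n - \<epsilon> * ln 2" using L(2) by (simp add: n_def log_def field_simps)
  ultimately have gap: "\<epsilon> * ln 2 / 2 \<le> ln m - L * ln 2" by linarith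
  have "0 < \<epsilon> * ln 2" using \<epsilon> by simp
  have log_n: "L \<le> log 2 n" using L \<epsilon> by (simp add: n_def)
  have "K * (m powr (p - 1) * L powr p) \<le> K powr p * (n powr (p - 1) * log 2 n powr p)"
  proof (rule mult_mono)
    show "K \<le> K powr p" using K p powr_mono[of 1 p K] by simp
    show "m powr (p - 1) * L powr p \<le> n powr (p - 1) * log 2 n powr p"
      using p L log_n by (intro mult_mono powr_mono2) (auto simp: n_def)
  qed (use K in auto)
  also have "\<dots> = (K * n powr ((p - 1) / p) * log 2 n) powr p"
    using p K L log_n by (simp add: powr_mult powr_powr n_def)
  finally have growth: "K * (m powr (p - 1) * L powr p) \<le> (K * n powr ((p - 1) / p) * log 2 n) powr p" .
  have "4 / (p - 1) \<le> \<epsilon> * ln 2 / 2 * K"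
    using K \<epsilon> p by (simp add: field_simps)
  then have "4 / (p - 1) * (m powr (p - 1) * L powr p) \<le> \<epsilon> * ln 2 / 2 * K * (m powr (p - 1) * L powr p)"
    by (rule mult_right_mono) simp
  then have "4 / (p - 1) * m powr (p - 1) * L powr p \<le> \<epsilon> * ln 2 / 2 * (K * (m powr (p - 1) * L powr p))"
    by (metis mult.assoc)
  also have "\<dots> \<le> (ln m - L * ln 2) * (K * n powr ((p - 1) / p) * log 2 n) powr p"
    using gap growth \<open>0 < \<epsilon> * ln 2\<close> K by (intro mult_mono) auto
  finally show ?thesis by (simp add: n_def)
qed

lemma approx_convex_set_in_dimension:
  fixes p \<epsilon> K :: real and n :: nat
  assumes p: "1 < p" "p \<le> 2" and \<epsilon>: "0 < \<epsilon>"
    and K: "1 \<le> K" "8 / ((p - 1) * \<epsilon> * ln 2) \<le> K"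
    and n: "\<epsilon> \<le> log 2 n" "2 / (\<epsilon> * ln 2) + 1 \<le> n" "3 * K * \<epsilon> / 25 \<le> log 2 n"
  shows "\<exists>A. A \<noteq> {} \<and> A \<subseteq> lp_space n \<and> approx_convex p n A \<and>
           lp_hausdorff p n A (conv_hull A) \<ge> ereal (log 2 (real n) - \<epsilon>) \<and>
           lp_diam p n A \<le> ereal (25 / \<epsilon> * real n powr ((p - 1) / p) * (log 2 (real n))\<^sup>2)"
proof -
  have "0 < 2 / (\<epsilon> * ln 2)" using \<epsilon> by simp
  then have "2 \<le> n" using n(2) by linarith
  then obtain m where nm: "n = Suc m" and m: "m \<ge> 1" "2 / (\<epsilon> * ln 2) \<le> m"
    using n(2) by (cases n) auto
  define L where "L = log 2 n - \<epsilon>"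
  define M where "M = K * n powr ((p - 1) / p) * log 2 n"
  have L: "0 \<le> L" using n by (simp add: L_def)
  have n_root: "1 \<le> n powr ((p - 1) / p)" using nm p by (intro ge_one_powr_ge_zero) auto
  have log_n: "0 < log 2 n" using nm m by simp
  have M: "0 < M" unfolding M_def using K n_root log_n nm by (intro mult_pos_pos) auto
  have "1 * 1 \<le> K * n powr ((p - 1) / p)" using K n_root by (intro mult_mono) auto
  have "log 2 m \<le> 1 * log 2 n" using nm m by simp
  also have "\<dots> \<le> M"
    unfolding M_def using \<open>1 * 1 \<le> K * n powr ((p - 1) / p)\<close> log_n by (intro mult_right_mono) auto
  finally have Mlog: "log 2 m \<le> M" .
  have key: "4 / (p - 1) * m powr (p - 1) * L powr p \<le> (ln m - L * ln 2) * M powr p"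
    using entropy_graph_key_condition[OF p \<epsilon> K m L] by (simp add: L_def M_def nm)
  have "3 * K \<le> 25 / \<epsilon> * log 2 n" using n(3) \<epsilon> by (simp add: field_simps)
  then have "3 * K * (n powr ((p - 1) / p) * log 2 n)
      \<le> 25 / \<epsilon> * log 2 n * (n powr ((p - 1) / p) * log 2 n)"
    using n_root log_n by (intro mult_right_mono) auto
  then have "3 * M \<le> 25 / \<epsilon> * n powr ((p - 1) / p) * (log 2 n)\<^sup>2"
    by (simp add: M_def power2_eq_square mult_ac)
  then show ?thesis
    using scaled_vertex_in_entropy_graph[of 0 m M] entropy_graph_subset_lp_space[of M m]
      approx_convex_entropy_graph[OF p(1) M, of m] lp_hausdorff_entropy_graph_ge[OF p m(1) M L key]
      lp_diam_entropy_graph_le[OF p(1) m(1) M Mlog] m M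
    by (intro exI[of _ "entropy_graph M m"]) (auto simp: nm L_def intro: order_trans)
qed

theorem corollary4p2:
  fixes p \<epsilon> :: real
  assumes "1 < p" "p \<le> 2" "0 < \<epsilon>" "\<epsilon> < 3"
  shows "\<exists>N::nat. \<forall>n\<ge>N. \<exists>A. A \<noteq> {} \<and> A \<subseteq> lp_space n \<and> approx_convex p n A \<and>
           lp_hausdorff p n A (conv_hull A) \<ge> ereal (log 2 (real n) - \<epsilon>) \<and>
           lp_diam p n A \<le> ereal (25 / \<epsilon> * real n powr ((p - 1) / p) * (log 2 (real n))\<^sup>2)"
proof -
  define K where "K = max 1 (8 / ((p - 1) * \<epsilon> * ln 2))"
  have "\<forall>\<^sub>F n in sequentially. \<epsilon> \<le> log 2 (real n) \<and> 2 / (\<epsilon> * ln 2) + 1 \<le> real n \<and>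
          3 * K * \<epsilon> / 25 \<le> log 2 (real n)"
    by (intro eventually_conj; real_asymp)
  then obtain N where "\<forall>n\<ge>N. \<epsilon> \<le> log 2 (real n) \<and> 2 / (\<epsilon> * ln 2) + 1 \<le> real n \<and>
          3 * K * \<epsilon> / 25 \<le> log 2 (real n)"
    unfolding eventually_sequentially by blast
  then show ?thesis
    using approx_convex_set_in_dimension[OF assms(1-3), of K] by (auto simp: K_def)
qed

end
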